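(* Consider simultaneous two-player weighted congestion games with affine costs and proportional cost functions, where the player weights $w_1,w_2\ge0$ (with $w_1+w_2>0$) are arbitrary. The price of anarchy (supremum over all weights and all instances, with respect to pure Nash equilibria) is approximately $2.0411$, both for general congestion games and for network routing games, and it is attained for $w_1/w_2 \approx 1.2704$ and for $w_2/w_1\approx 1.2704$.
   Context: A weighted two-player congestion game with affine costs consists of a finite set $R$ of resources, coefficients $\alpha_r,\beta_r \geq 0$ for each $r\in R$, two players $i=1,2$ with weights $w_i\ge 0$, and for each player $i$ a nonempty finite set $\mathcal{A}_i \subseteq 2^R$ of actions. For an action profile $A=(A_1,A_2)$ the load of $r$ is $x_r(A)=\sum_{j:\, r\in A_j} w_j$. With proportional costs, player $i$ pays $C_i(A)=w_i\sum_{r\in A_i}(\alpha_r+\beta_r x_r(A))$. The social cost is $C(A)=C_1(A)+C_2(A)$. In a network routing game, $R$ is the arc set of a directed graph, player $i$ has a source $s_i$ and sink $t_i$, and $\mathcal{A}_i$ is the set of arc sets of directed $s_i$–$t_i$ paths. A pure Nash equilibrium is a profile from which no player can lower her cost by unilaterally changing her action. The price of anarchy of an instance is the maximum over Nash equilibria $A$ of $C(A)/\min_{A'} C(A')$; the price of anarchy of a class is the supremum over all instances (with positive optimal social cost). *)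

theory Defs
  imports Complex_Main
begin

text \<open>Resources are natural numbers (any finite resource set can be
  relabelled by naturals).\<close>

definition load :: "real \<Rightarrow> real \<Rightarrow> nat set \<Rightarrow> nat set \<Rightarrow> nat \<Rightarrow> real" where
  "load w1 w2 S1 S2 r = (if r \<in> S1 then w1 else 0) + (if r \<in> S2 then w2 else 0)"

definition cost1 :: "(nat \<Rightarrow> real) \<Rightarrow> (nat \<Rightarrow> real) \<Rightarrow> real \<Rightarrow> real \<Rightarrow> nat set \<Rightarrow> nat set \<Rightarrow> real" where
  "cost1 a b w1 w2 S1 S2 = w1 * (\<Sum>r\<in>S1. a r + b r * load w1 w2 S1 S2 r)"

definition cost2 :: "(nat \<Rightarrow> real) \<Rightarrow> (nat \<Rightarrow> real) \<Rightarrow> real \<Rightarrow> real \<Rightarrow> nat set \<Rightarrow> nat set \<Rightarrow> real" where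
  "cost2 a b w1 w2 S1 S2 = w2 * (\<Sum>r\<in>S2. a r + b r * load w1 w2 S1 S2 r)"

definition social_cost :: "(nat \<Rightarrow> real) \<Rightarrow> (nat \<Rightarrow> real) \<Rightarrow> real \<Rightarrow> real \<Rightarrow> nat set \<Rightarrow> nat set \<Rightarrow> real" where
  "social_cost a b w1 w2 S1 S2 = cost1 a b w1 w2 S1 S2 + cost2 a b w1 w2 S1 S2"

definition valid_game :: "nat set \<Rightarrow> (nat \<Rightarrow> real) \<Rightarrow> (nat \<Rightarrow> real) \<Rightarrow> nat set set \<Rightarrow> nat set set \<Rightarrow> bool" where
  "valid_game R a b A1 A2 \<longleftrightarrow> finite R \<and> (\<forall>r\<in>R. a r \<ge> 0 \<and> b r \<ge> 0)
     \<and> finite A1 \<and> A1 \<noteq> {} \<and> (\<forall>S\<in>A1. S \<subseteq> R)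
     \<and> finite A2 \<and> A2 \<noteq> {} \<and> (\<forall>S\<in>A2. S \<subseteq> R)"

definition is_NE :: "(nat \<Rightarrow> real) \<Rightarrow> (nat \<Rightarrow> real) \<Rightarrow> real \<Rightarrow> real \<Rightarrow> nat set set \<Rightarrow> nat set set \<Rightarrow> nat set \<Rightarrow> nat set \<Rightarrow> bool" where
  "is_NE a b w1 w2 A1 A2 S1 S2 \<longleftrightarrow> S1 \<in> A1 \<and> S2 \<in> A2
     \<and> (\<forall>T\<in>A1. cost1 a b w1 w2 S1 S2 \<le> cost1 a b w1 w2 T S2)
     \<and> (\<forall>T\<in>A2. cost2 a b w1 w2 S1 S2 \<le> cost2 a b w1 w2 S1 T)"

definition opt_cost :: "(nat \<Rightarrow> real) \<Rightarrow> (nat \<Rightarrow> real) \<Rightarrow> real \<Rightarrow> real \<Rightarrow> nat set set \<Rightarrow> nat set set \<Rightarrow> real" where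
  "opt_cost a b w1 w2 A1 A2 = Min {social_cost a b w1 w2 S1 S2 | S1 S2. S1 \<in> A1 \<and> S2 \<in> A2}"

definition poa_ratios :: "real \<Rightarrow> real \<Rightarrow> real set" where
  "poa_ratios w1 w2 = {social_cost a b w1 w2 S1 S2 / opt_cost a b w1 w2 A1 A2 | R a b A1 A2 S1 S2.
      valid_game R a b A1 A2 \<and> opt_cost a b w1 w2 A1 A2 > 0 \<and> is_NE a b w1 w2 A1 A2 S1 S2}"

text \<open>Directed multigraph: arcs are naturals in E with tail function src and
  head function dst.\<close>
definition is_st_path :: "nat set \<Rightarrow> (nat \<Rightarrow> nat) \<Rightarrow> (nat \<Rightarrow> nat) \<Rightarrow> nat \<Rightarrow> nat \<Rightarrow> nat set \<Rightarrow> bool" where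
  "is_st_path E src dst s t P \<longleftrightarrow> (\<exists>es vs. set es \<subseteq> E \<and> distinct es \<and> P = set es
      \<and> length vs = length es + 1 \<and> distinct vs \<and> vs ! 0 = s \<and> vs ! length es = t
      \<and> (\<forall>i<length es. src (es ! i) = vs ! i \<and> dst (es ! i) = vs ! (i + 1)))"

definition paths :: "nat set \<Rightarrow> (nat \<Rightarrow> nat) \<Rightarrow> (nat \<Rightarrow> nat) \<Rightarrow> nat \<Rightarrow> nat \<Rightarrow> nat set set" where
  "paths E src dst s t = {P. is_st_path E src dst s t P}"

definition network_ratios :: "real \<Rightarrow> real \<Rightarrow> real set" where
  "network_ratios w1 w2 = {social_cost a b w1 w2 S1 S2
        / opt_cost a b w1 w2 (paths E src dst s1 t1) (paths E src dst s2 t2)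
      | E src dst s1 t1 s2 t2 a b S1 S2.
      valid_game E a b (paths E src dst s1 t1) (paths E src dst s2 t2)
      \<and> opt_cost a b w1 w2 (paths E src dst s1 t1) (paths E src dst s2 t2) > 0
      \<and> is_NE a b w1 w2 (paths E src dst s1 t1) (paths E src dst s2 t2) S1 S2}"

definition admissible_weights :: "real \<Rightarrow> real \<Rightarrow> bool" where
  "admissible_weights w1 w2 \<longleftrightarrow> w1 \<ge> 0 \<and> w2 \<ge> 0 \<and> w1 + w2 > 0"

definition poa_all :: "real set" where
  "poa_all = (\<Union>{poa_ratios w1 w2 | w1 w2. admissible_weights w1 w2})"

definition network_poa_all :: "real set" where
  "network_poa_all = (\<Union>{network_ratios w1 w2 | w1 w2. admissible_weights w1 w2})"

definition sup_is :: "real set \<Rightarrow> real \<Rightarrow> bool" where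
  "sup_is S \<rho> \<longleftrightarrow> S \<noteq> {} \<and> bdd_above S \<and> Sup S = \<rho>"

end

theory Submission
  imports Defs
begin

text \<open>For \<open>w2 \<le> w1\<close> put \<open>Q = w1^2 + w1*w2 + w2^2\<close> and \<open>D = w1^3 + w1*w2^2 + w2^3\<close>.
  Adding player 1's equilibrium inequality with weight \<open>w1*Q\<close> and player 2's with weight \<open>D\<close>
  and checking the result resource by resource gives \<open>D * C(NE) \<le> (w1 + w2) * Q * C(OPT)\<close>;
  swapping the players covers \<open>w1 < w2\<close>. The ratio \<open>(w1 + w2) * Q / D\<close> is homogeneous
  and is maximised at \<open>w1 / w2 = l\<close>, the root near 1.2704 of \<open>2l^4 + 2l^3 - 2l^2 - 4l - 1\<close>,
  where it is about 2.0411. A network with two commodities on eight vertices and weights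
  \<open>(l, 1)\<close> has an equilibrium attaining this ratio exactly.\<close>

lemma sum_as_restricted_sum:
  assumes "finite R" "S \<subseteq> R"
  shows "sum f S = (\<Sum>r\<in>R. if r \<in> S then f r else 0)"
  using sum.inter_restrict[OF assms(1), of f S] assms(2) by (simp add: Int_absorb1)

lemma cost1_eq_sum:
  assumes "finite R" "S1 \<subseteq> R"
  shows "cost1 a b w1 w2 S1 S2
    = (\<Sum>r\<in>R. (if r \<in> S1 then w1 else 0) * (a r + b r * load w1 w2 S1 S2 r))"
  unfolding cost1_def sum_as_restricted_sum[OF assms] sum_distrib_left
  by (rule sum.cong) simp_all

lemma cost2_eq_sum:
  assumes "finite R" "S2 \<subseteq> R"
  shows "cost2 a b w1 w2 S1 S2
    = (\<Sum>r\<in>R. (if r \<in> S2 then w2 else 0) * (a r + b r * load w1 w2 S1 S2 r))"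
  unfolding cost2_def sum_as_restricted_sum[OF assms] sum_distrib_left
  by (rule sum.cong) simp_all

lemma social_cost_eq_sum:
  assumes "finite R" "S1 \<subseteq> R" "S2 \<subseteq> R"
  shows "social_cost a b w1 w2 S1 S2
    = (\<Sum>r\<in>R. load w1 w2 S1 S2 r * (a r + b r * load w1 w2 S1 S2 r))"
  unfolding social_cost_def cost1_eq_sum[OF assms(1,2)] cost2_eq_sum[OF assms(1,3)]
    sum.distrib[symmetric]
  by (rule sum.cong) (simp_all add: load_def distrib_right)

lemma resource_smoothness:
  fixes a b w1 w2 x1 x2 y1 y2 :: real
  assumes "0 \<le> a" "0 \<le> b" "0 \<le> w2" "w2 \<le> w1"
    and "x1 \<in> {0, w1}" "x2 \<in> {0, w2}" "y1 \<in> {0, w1}" "y2 \<in> {0, w2}"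
  shows "(w1^3 + w1*w2^2 + w2^3) * ((x1 + x2) * (a + b * (x1 + x2)))
     + w1 * (w1^2 + w1*w2 + w2^2) * (y1 * (a + b * (y1 + x2)) - x1 * (a + b * (x1 + x2)))
     + (w1^3 + w1*w2^2 + w2^3) * (y2 * (a + b * (x1 + y2)) - x2 * (a + b * (x1 + x2)))
     \<le> (w1 + w2) * (w1^2 + w1*w2 + w2^2) * ((y1 + y2) * (a + b * (y1 + y2)))"
proof -
  define d where "d = w1 - w2"
  have "0 \<le> d" "w1 = w2 + d"
    using assms(4) by (simp_all add: d_def)
  \<comment> \<open>In each of the 16 cases the difference of the two sides is a polynomial in
    \<open>a, b, w2, d\<close> with nonnegative coefficients.\<close>
  then show ?thesis
    using assms by (auto simp: algebra_simps power2_eq_square power3_eq_cube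
        intro!: add_nonneg_nonneg mult_nonneg_nonneg)
qed

lemma nash_social_cost_bound:
  assumes game: "valid_game R a b A1 A2" and NE: "is_NE a b w1 w2 A1 A2 S1 S2"
    and T: "T1 \<in> A1" "T2 \<in> A2" and w: "0 \<le> w2" "w2 \<le> w1"
  shows "(w1^3 + w1*w2^2 + w2^3) * social_cost a b w1 w2 S1 S2
     \<le> (w1 + w2) * (w1^2 + w1*w2 + w2^2) * social_cost a b w1 w2 T1 T2"
proof -
  define D where "D = w1^3 + w1*w2^2 + w2^3"
  define Q where "Q = w1^2 + w1*w2 + w2^2"
  have R: "finite R" "\<And>r. r \<in> R \<Longrightarrow> 0 \<le> a r \<and> 0 \<le> b r"
    using game by (auto simp: valid_game_def)
  have S: "S1 \<in> A1" "S2 \<in> A2"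
    and dev1: "cost1 a b w1 w2 S1 S2 \<le> cost1 a b w1 w2 T1 S2"
    and dev2: "cost2 a b w1 w2 S1 S2 \<le> cost2 a b w1 w2 S1 T2"
    using NE T by (auto simp: is_NE_def)
  have sub: "S1 \<subseteq> R" "S2 \<subseteq> R" "T1 \<subseteq> R" "T2 \<subseteq> R"
    using game S T by (auto simp: valid_game_def)
  have "D * social_cost a b w1 w2 S1 S2
      \<le> D * social_cost a b w1 w2 S1 S2
        + w1 * Q * (cost1 a b w1 w2 T1 S2 - cost1 a b w1 w2 S1 S2)
        + D * (cost2 a b w1 w2 S1 T2 - cost2 a b w1 w2 S1 S2)"
    using dev1 dev2 w by (simp add: D_def Q_def)
  also have "\<dots> = (\<Sum>r\<in>R. D * (load w1 w2 S1 S2 r * (a r + b r * load w1 w2 S1 S2 r))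
      + w1 * Q * ((if r \<in> T1 then w1 else 0) * (a r + b r * load w1 w2 T1 S2 r)
                 - (if r \<in> S1 then w1 else 0) * (a r + b r * load w1 w2 S1 S2 r))
      + D * ((if r \<in> T2 then w2 else 0) * (a r + b r * load w1 w2 S1 T2 r)
             - (if r \<in> S2 then w2 else 0) * (a r + b r * load w1 w2 S1 S2 r)))"
    unfolding social_cost_eq_sum[OF R(1) sub(1,2)] cost1_eq_sum[OF R(1) sub(1)]
      cost1_eq_sum[OF R(1) sub(3)] cost2_eq_sum[OF R(1) sub(2)] cost2_eq_sum[OF R(1) sub(4)]
    by (simp add: sum.distrib sum_subtractf sum_distrib_left right_diff_distrib)
  also have "\<dots> \<le> (\<Sum>r\<in>R. (w1 + w2) * Q * (load w1 w2 T1 T2 r * (a r + b r * load w1 w2 T1 T2 r)))"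
    unfolding D_def Q_def load_def using R(2) w
    by (intro sum_mono resource_smoothness) auto
  also have "\<dots> = (w1 + w2) * Q * social_cost a b w1 w2 T1 T2"
    by (simp add: social_cost_eq_sum[OF R(1) sub(3,4)] sum_distrib_left)
  finally show ?thesis
    unfolding D_def Q_def .
qed

lemma load_swap: "load w2 w1 S2 S1 = load w1 w2 S1 S2"
  by (auto simp: load_def)

lemma cost_swap:
  "cost1 a b w2 w1 S2 S1 = cost2 a b w1 w2 S1 S2"
  "cost2 a b w2 w1 S2 S1 = cost1 a b w1 w2 S1 S2"
  by (simp_all add: cost1_def cost2_def load_swap)

lemma social_cost_swap: "social_cost a b w2 w1 S2 S1 = social_cost a b w1 w2 S1 S2"
  unfolding social_cost_def cost_swap[of a b w1 w2 S1 S2] by (rule add.commute)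

lemma opt_cost_swap: "opt_cost a b w2 w1 A2 A1 = opt_cost a b w1 w2 A1 A2"
proof -
  have "{social_cost a b w2 w1 S2 S1 | S2 S1. S2 \<in> A2 \<and> S1 \<in> A1}
      = {social_cost a b w1 w2 S1 S2 | S1 S2. S1 \<in> A1 \<and> S2 \<in> A2}"
    by (metis (no_types, opaque_lifting) social_cost_swap)
  then show ?thesis
    by (simp add: opt_cost_def)
qed

lemma is_NE_swap: "is_NE a b w2 w1 A2 A1 S2 S1 = is_NE a b w1 w2 A1 A2 S1 S2"
  unfolding is_NE_def cost_swap[of a b w1 w2] by auto

lemma valid_game_swap: "valid_game R a b A2 A1 = valid_game R a b A1 A2"
  by (auto simp: valid_game_def)

lemma poa_ratios_swap: "poa_ratios w1 w2 \<subseteq> poa_ratios w2 w1"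
proof
  fix x assume "x \<in> poa_ratios w1 w2"
  then obtain R a b A1 A2 S1 S2 where
    "x = social_cost a b w1 w2 S1 S2 / opt_cost a b w1 w2 A1 A2"
    "valid_game R a b A1 A2" "opt_cost a b w1 w2 A1 A2 > 0" "is_NE a b w1 w2 A1 A2 S1 S2"
    unfolding poa_ratios_def by blast
  then show "x \<in> poa_ratios w2 w1"
    unfolding poa_ratios_def
    by (intro CollectI exI[of _ R] exI[of _ a] exI[of _ b] exI[of _ A2] exI[of _ A1]
        exI[of _ S2] exI[of _ S1])
      (simp only: social_cost_swap opt_cost_swap is_NE_swap valid_game_swap)
qed

lemma opt_cost_attained:
  assumes "valid_game R a b A1 A2"
  obtains T1 T2 where "T1 \<in> A1" "T2 \<in> A2"
    "opt_cost a b w1 w2 A1 A2 = social_cost a b w1 w2 T1 T2"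
proof -
  have costs: "{social_cost a b w1 w2 S1 S2 | S1 S2. S1 \<in> A1 \<and> S2 \<in> A2}
      = (\<lambda>(S1, S2). social_cost a b w1 w2 S1 S2) ` (A1 \<times> A2)"
    by auto
  have "finite (A1 \<times> A2)" "A1 \<times> A2 \<noteq> {}"
    using assms by (auto simp: valid_game_def)
  then have "opt_cost a b w1 w2 A1 A2 \<in> (\<lambda>(S1, S2). social_cost a b w1 w2 S1 S2) ` (A1 \<times> A2)"
    unfolding opt_cost_def costs by (intro Min_in) auto
  then show ?thesis
    using that by auto
qed

definition poa_bound :: "real \<Rightarrow> real \<Rightarrow> real" where
  "poa_bound w1 w2 = (w1 + w2) * (w1^2 + w1*w2 + w2^2) / (w1^3 + w1*w2^2 + w2^3)"

lemma poa_ratios_le_poa_bound: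
  assumes w: "0 \<le> w2" "w2 \<le> w1" "0 < w1" and x: "x \<in> poa_ratios w1 w2"
  shows "x \<le> poa_bound w1 w2"
proof -
  obtain R a b A1 A2 S1 S2 where x_eq: "x = social_cost a b w1 w2 S1 S2 / opt_cost a b w1 w2 A1 A2"
    and game: "valid_game R a b A1 A2" and opt_pos: "opt_cost a b w1 w2 A1 A2 > 0"
    and NE: "is_NE a b w1 w2 A1 A2 S1 S2"
    using x unfolding poa_ratios_def by blast
  obtain T1 T2 where T: "T1 \<in> A1" "T2 \<in> A2"
    and opt: "opt_cost a b w1 w2 A1 A2 = social_cost a b w1 w2 T1 T2"
    using opt_cost_attained[OF game] .
  have "0 < w1^3 + w1*w2^2 + w2^3"
    using w by (simp add: add_pos_nonneg)
  with nash_social_cost_bound[OF game NE T w(1,2)]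
  have "social_cost a b w1 w2 S1 S2 \<le> poa_bound w1 w2 * social_cost a b w1 w2 T1 T2"
    unfolding poa_bound_def by (simp add: field_simps)
  then show ?thesis
    using opt_pos unfolding x_eq opt by (simp add: divide_le_eq)
qed

text \<open>The quartic is, up to sign, the numerator of the derivative of \<open>\<lambda>l. poa_bound l 1\<close>.\<close>

definition critical_ratio :: "real \<Rightarrow> bool" where
  "critical_ratio l \<longleftrightarrow> 0 < l \<and> 2*l^4 + 2*l^3 - 2*l^2 - 4*l - 1 = 0"

lemma poa_bound_le_critical:
  fixes l w1 w2 :: real
  assumes l: "critical_ratio l" and w: "0 < w1" "0 \<le> w2"
  shows "poa_bound w1 w2 \<le> poa_bound l 1"
proof -
  have "0 < l" and quartic: "2*l^4 + 2*l^3 - 2*l^2 - 4*l - 1 = 0"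
    using l by (simp_all add: critical_ratio_def)
  have "l * ((l + 1) * (l^2 + l + 1) * (w1^3 + w1*w2^2 + w2^3)
           - (l^3 + l + 1) * ((w1 + w2) * (w1^2 + w1*w2 + w2^2)))
      = (2*l + 1) * (w1 - l*w2)^2 * (l^2*w1 + w2)"
    using quartic by algebra
  also have "\<dots> \<ge> 0"
    using \<open>0 < l\<close> w by simp
  finally have "(l^3 + l + 1) * ((w1 + w2) * (w1^2 + w1*w2 + w2^2))
      \<le> (l + 1) * (l^2 + l + 1) * (w1^3 + w1*w2^2 + w2^3)"
    using \<open>0 < l\<close> by (simp add: zero_le_mult_iff)
  moreover have "0 < l^3 + l + 1" "0 < w1^3 + w1*w2^2 + w2^3"
    using \<open>0 < l\<close> w by (simp_all add: add_pos_pos add_pos_nonneg)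
  ultimately show ?thesis
    by (simp add: poa_bound_def field_simps)
qed

lemma poa_ratios_le_critical:
  assumes l: "critical_ratio l" and w: "admissible_weights w1 w2" and x: "x \<in> poa_ratios w1 w2"
  shows "x \<le> poa_bound l 1"
proof (cases "w2 \<le> w1")
  case True
  with w have "0 < w1" "0 \<le> w2"
    by (auto simp: admissible_weights_def)
  with True x have "x \<le> poa_bound w1 w2"
    by (intro poa_ratios_le_poa_bound) auto
  also have "\<dots> \<le> poa_bound l 1"
    using poa_bound_le_critical[OF l] \<open>0 < w1\<close> \<open>0 \<le> w2\<close> .
  finally show ?thesis .
next
  case False
  with w have "0 < w2" "0 \<le> w1"
    by (auto simp: admissible_weights_def)
  with False x poa_ratios_swap have "x \<le> poa_bound w2 w1"
    by (intro poa_ratios_le_poa_bound) auto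
  also have "\<dots> \<le> poa_bound l 1"
    using poa_bound_le_critical[OF l] \<open>0 < w2\<close> \<open>0 \<le> w1\<close> .
  finally show ?thesis .
qed

lemma network_ratios_subset: "network_ratios w1 w2 \<subseteq> poa_ratios w1 w2"
  unfolding network_ratios_def poa_ratios_def by blast

lemma network_ratios_swap: "network_ratios w1 w2 \<subseteq> network_ratios w2 w1"
proof
  fix x assume "x \<in> network_ratios w1 w2"
  then obtain E src dst s1 t1 s2 t2 a b S1 S2 where
    "x = social_cost a b w1 w2 S1 S2
      / opt_cost a b w1 w2 (paths E src dst s1 t1) (paths E src dst s2 t2)"
    "valid_game E a b (paths E src dst s1 t1) (paths E src dst s2 t2)"
    "opt_cost a b w1 w2 (paths E src dst s1 t1) (paths E src dst s2 t2) > 0"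
    "is_NE a b w1 w2 (paths E src dst s1 t1) (paths E src dst s2 t2) S1 S2"
    unfolding network_ratios_def by blast
  then show "x \<in> network_ratios w2 w1"
    unfolding network_ratios_def
    by (intro CollectI exI[of _ E] exI[of _ src] exI[of _ dst] exI[of _ s2] exI[of _ t2]
        exI[of _ s1] exI[of _ t1] exI[of _ a] exI[of _ b] exI[of _ S2] exI[of _ S1])
      (simp only: social_cost_swap opt_cost_swap is_NE_swap valid_game_swap)
qed

inductive walk :: "nat set \<Rightarrow> (nat \<Rightarrow> nat) \<Rightarrow> (nat \<Rightarrow> nat) \<Rightarrow> nat \<Rightarrow> nat \<Rightarrow> nat set \<Rightarrow> bool"
  for E src dst where
  walk_nil: "walk E src dst s s {}"
| walk_cons: "e \<in> E \<Longrightarrow> src e = s \<Longrightarrow> walk E src dst (dst e) t P \<Longrightarrow> walk E src dst s t (insert e P)"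

lemma walk_of_vertex_list:
  assumes "set es \<subseteq> E" "length vs = length es + 1" "vs ! 0 = s" "vs ! length es = t"
    "\<forall>i<length es. src (es ! i) = vs ! i \<and> dst (es ! i) = vs ! (i + 1)"
  shows "walk E src dst s t (set es)"
  using assms
proof (induction es arbitrary: vs s)
  case Nil
  then show ?case by (auto intro: walk_nil)
next
  case (Cons e es)
  then obtain vs' where vs: "vs = s # vs'"
    by (cases vs) auto
  have e: "src e = s" "dst e = vs' ! 0"
    using Cons.prems(5) vs by (auto dest: spec[of _ 0])
  have "walk E src dst (dst e) t (set es)"
  proof (rule Cons.IH)
    show "\<forall>i<length es. src (es ! i) = vs' ! i \<and> dst (es ! i) = vs' ! (i + 1)"
      using Cons.prems(5) vs by (auto dest: spec[of _ "Suc i" for i])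
  qed (use Cons.prems vs e in auto)
  then show ?case
    using Cons.prems(1) e by (auto intro: walk_cons)
qed

lemma walk_if_st_path: "is_st_path E src dst s t P \<Longrightarrow> walk E src dst s t P"
  unfolding is_st_path_def using walk_of_vertex_list by blast

text \<open>Player 1 routes from 0 to 6 and player 2 from 1 to 7. Each has an upper route through
  arc 1 (from 2 to 3) and a lower route through arc 6 (from 4 to 5); the only costly arcs are
  arc 3 (constant cost), arc 1 and arc 6 (linear costs). In the equilibrium player 1 takes the
  lower and player 2 the upper route, in the optimum they exchange.\<close>

definition gadget_arcs :: "nat set" where "gadget_arcs = {..<10}"
definition gadget_tail :: "nat \<Rightarrow> nat" where "gadget_tail e = [0,2,3,1,3,0,4,5,1,5] ! e"
definition gadget_head :: "nat \<Rightarrow> nat" where "gadget_head e = [2,3,6,2,7,4,5,6,4,7] ! e"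

abbreviation gadget_paths :: "nat \<Rightarrow> nat \<Rightarrow> nat set set" where
  "gadget_paths \<equiv> paths gadget_arcs gadget_tail gadget_head"

definition walks_to_6 :: "nat \<Rightarrow> nat set set" where
  "walks_to_6 v = (if v = 6 then {{}} else if v = 3 then {{2}} else if v = 5 then {{7}}
     else if v = 2 then {{1,2}} else if v = 4 then {{6,7}} else if v = 0 then {{0,1,2},{5,6,7}}
     else if v = 1 then {{3,1,2},{8,6,7}} else {})"

definition walks_to_7 :: "nat \<Rightarrow> nat set set" where
  "walks_to_7 v = (if v = 7 then {{}} else if v = 3 then {{4}} else if v = 5 then {{9}}
     else if v = 2 then {{1,4}} else if v = 4 then {{6,9}} else if v = 0 then {{0,1,4},{5,6,9}}
     else if v = 1 then {{3,1,4},{8,6,9}} else {})"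

lemma gadget_walks:
  assumes "walk gadget_arcs gadget_tail gadget_head v t P"
  shows "(t = 6 \<longrightarrow> P \<in> walks_to_6 v) \<and> (t = 7 \<longrightarrow> P \<in> walks_to_7 v)"
  using assms
proof (induction rule: walk.induct)
  case (walk_nil s)
  then show ?case by (simp add: walks_to_6_def walks_to_7_def)
next
  case (walk_cons e s t P)
  have "e = 0 \<or> e = 1 \<or> e = 2 \<or> e = 3 \<or> e = 4 \<or> e = 5 \<or> e = 6 \<or> e = 7 \<or> e = 8 \<or> e = 9"
    using walk_cons.hyps(1) by (auto simp: gadget_arcs_def)
  then show ?case
    using walk_cons.hyps(2) walk_cons.IH
    by (elim disjE) (auto simp: walks_to_6_def walks_to_7_def gadget_tail_def gadget_head_def)
qed

lemma gadget_st_pathI: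
  assumes "set es \<subseteq> gadget_arcs" "distinct es" "length es = 3" "length vs = 4" "distinct vs"
    "vs ! 0 = s" "vs ! 3 = t"
    "\<forall>i<3. gadget_tail (es ! i) = vs ! i \<and> gadget_head (es ! i) = vs ! (i + 1)"
  shows "set es \<in> gadget_paths s t"
  unfolding paths_def is_st_path_def using assms by (intro CollectI exI[of _ es] exI[of _ vs]) simp

lemma all_less_3: "(\<forall>i<(3::nat). P i) \<longleftrightarrow> P 0 \<and> P 1 \<and> P 2"
  by (auto simp: numeral_3_eq_3 numeral_2_eq_2 less_Suc_eq)

lemma gadget_paths_0_6: "gadget_paths 0 6 = {{0,1,2}, {5,6,7}}"
proof
  show "gadget_paths 0 6 \<subseteq> {{0,1,2}, {5,6,7}}"
    using gadget_walks walk_if_st_path unfolding paths_def walks_to_6_def by fastforce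
  have "set [0,1,2] \<in> gadget_paths 0 6"
    by (rule gadget_st_pathI[where vs="[0,2,3,6]"])
      (simp_all add: gadget_arcs_def all_less_3 gadget_tail_def gadget_head_def)
  moreover have "set [5,6,7] \<in> gadget_paths 0 6"
    by (rule gadget_st_pathI[where vs="[0,4,5,6]"])
      (simp_all add: gadget_arcs_def all_less_3 gadget_tail_def gadget_head_def)
  ultimately show "{{0,1,2}, {5,6,7}} \<subseteq> gadget_paths 0 6"
    by simp
qed

lemma gadget_paths_1_7: "gadget_paths 1 7 = {{3,1,4}, {8,6,9}}"
proof
  show "gadget_paths 1 7 \<subseteq> {{3,1,4}, {8,6,9}}"
    using gadget_walks walk_if_st_path unfolding paths_def walks_to_7_def by fastforce
  have "set [3,1,4] \<in> gadget_paths 1 7"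
    by (rule gadget_st_pathI[where vs="[1,2,3,7]"])
      (simp_all add: gadget_arcs_def all_less_3 gadget_tail_def gadget_head_def)
  moreover have "set [8,6,9] \<in> gadget_paths 1 7"
    by (rule gadget_st_pathI[where vs="[1,4,5,7]"])
      (simp_all add: gadget_arcs_def all_less_3 gadget_tail_def gadget_head_def)
  ultimately show "{{3,1,4}, {8,6,9}} \<subseteq> gadget_paths 1 7"
    by simp
qed

definition gadget_const :: "real \<Rightarrow> nat \<Rightarrow> real" where
  "gadget_const l r = (if r = 3 then (l^2 + l + 1) / (l + 1) else 0)"

definition gadget_slope :: "real \<Rightarrow> nat \<Rightarrow> real" where
  "gadget_slope l r = (if r = 1 then l / (l + 1) else if r = 6 then 1 else 0)"

lemma gadget_valid_game:
  assumes "0 < l"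
  shows "valid_game gadget_arcs (gadget_const l) (gadget_slope l) (gadget_paths 0 6) (gadget_paths 1 7)"
  unfolding valid_game_def gadget_paths_0_6 gadget_paths_1_7
  using assms by (auto simp: gadget_arcs_def gadget_const_def gadget_slope_def)

lemma gadget_costs:
  assumes "0 < l"
  defines "a \<equiv> gadget_const l" and "b \<equiv> gadget_slope l"
  shows "cost1 a b l 1 {5,6,7} {3,1,4} = l^2" "cost2 a b l 1 {5,6,7} {3,1,4} = l + 1"
    "cost1 a b l 1 {0,1,2} {3,1,4} = l^2" "cost2 a b l 1 {0,1,2} {3,1,4} = (l^2 + l + 1) / (l + 1) + l"
    "cost1 a b l 1 {5,6,7} {8,6,9} = l^2 + l" "cost2 a b l 1 {5,6,7} {8,6,9} = l + 1"
    "cost1 a b l 1 {0,1,2} {8,6,9} = l^3 / (l + 1)" "cost2 a b l 1 {0,1,2} {8,6,9} = 1"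
  using assms
  by (simp_all add: cost1_def cost2_def load_def a_def b_def gadget_const_def gadget_slope_def)
    (simp_all add: add_divide_distrib[symmetric] field_simps power2_eq_square power3_eq_cube)

lemma gadget_is_NE:
  assumes "0 < l"
  shows "is_NE (gadget_const l) (gadget_slope l) l 1 (gadget_paths 0 6) (gadget_paths 1 7)
    {5,6,7} {3,1,4}"
  unfolding is_NE_def gadget_paths_0_6 gadget_paths_1_7 using gadget_costs[OF assms] by simp

lemma image_pairs_doubleton:
  "{f S1 S2 | S1 S2. S1 \<in> {p, q} \<and> S2 \<in> {r, s}} = {f p r, f p s, f q r, f q s}"
  by blast

lemma gadget_opt_cost:
  assumes "0 < l"
  shows "opt_cost (gadget_const l) (gadget_slope l) l 1 (gadget_paths 0 6) (gadget_paths 1 7)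
    = l^3 / (l + 1) + 1"
proof -
  have costs: "{social_cost (gadget_const l) (gadget_slope l) l 1 S1 S2 | S1 S2.
        S1 \<in> {{0,1,2}, {5,6,7}} \<and> S2 \<in> {{3,1,4}, {8,6,9}}}
      = {l^2 + ((l^2 + l + 1) / (l + 1) + l), l^3 / (l + 1) + 1, l^2 + (l + 1), l^2 + l + (l + 1)}"
    unfolding image_pairs_doubleton social_cost_def gadget_costs[OF assms] ..
  have "l^3 / (l + 1) \<le> l^2"
    using assms by (simp add: divide_le_eq power2_eq_square power3_eq_cube algebra_simps)
  moreover have "1 \<le> (l^2 + l + 1) / (l + 1)"
    using assms by (simp add: le_divide_eq)
  ultimately have "l^3 / (l + 1) + 1 \<le> l^2 + ((l^2 + l + 1) / (l + 1) + l)
      \<and> l^3 / (l + 1) + 1 \<le> l^2 + (l + 1) \<and> l^3 / (l + 1) + 1 \<le> l^2 + l + (l + 1)"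
    using assms by (intro conjI) linarith+
  then show ?thesis
    unfolding opt_cost_def gadget_paths_0_6 gadget_paths_1_7 costs by (intro Min_eqI) auto
qed

lemma gadget_social_cost:
  assumes "0 < l"
  shows "social_cost (gadget_const l) (gadget_slope l) l 1 {5,6,7} {3,1,4} = l^2 + l + 1"
  using gadget_costs[OF assms] by (simp add: social_cost_def)

lemma poa_bound_in_network_ratios:
  assumes "0 < l"
  shows "poa_bound l 1 \<in> network_ratios l 1"
proof -
  let ?a = "gadget_const l" and ?b = "gadget_slope l"
  have opt_pos: "0 < opt_cost ?a ?b l 1 (gadget_paths 0 6) (gadget_paths 1 7)"
    unfolding gadget_opt_cost[OF assms] using assms by (simp add: add_nonneg_pos)
  have "poa_bound l 1 = (l^2 + l + 1) / (l^3 / (l + 1) + 1)"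
    using assms by (simp add: poa_bound_def field_simps power2_eq_square power3_eq_cube)
  also have "\<dots> = social_cost ?a ?b l 1 {5,6,7} {3,1,4}
      / opt_cost ?a ?b l 1 (gadget_paths 0 6) (gadget_paths 1 7)"
    using assms by (simp only: gadget_social_cost gadget_opt_cost)
  finally show ?thesis
    unfolding network_ratios_def
    using gadget_valid_game[OF assms] gadget_is_NE[OF assms] opt_pos by blast
qed

lemma critical_ratio_exists:
  "\<exists>l. 1270361/1000000 \<le> l \<and> l \<le> 1270362/1000000 \<and> critical_ratio l"
proof -
  have "\<exists>l. 1270361/1000000 \<le> l \<and> l \<le> 1270362/1000000
      \<and> (\<lambda>l::real. 2*l^4 + 2*l^3 - 2*l^2 - 4*l - 1) l = 0"
    by (rule IVT) (auto intro!: continuous_intros simp: power_divide)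
  then show ?thesis
    by (auto simp: critical_ratio_def)
qed

lemma poa_bound_approx:
  fixes l :: real
  assumes l: "1270361/1000000 \<le> l" "l \<le> 1270362/1000000"
  shows "\<bar>poa_bound l 1 - 2.0411\<bar> \<le> 0.00005"
proof -
  have poa_bound_eq: "poa_bound l 1 = (l^3 + 2*l^2 + 2*l + 1) / (l^3 + l + 1)"
    by (simp add: poa_bound_def algebra_simps power2_eq_square power3_eq_cube)
  have "(1270361/1000000)^2 \<le> l^2" "l^2 \<le> (1270362/1000000)^2"
    "(1270361/1000000)^3 \<le> l^3" "l^3 \<le> (1270362/1000000)^3"
    using l by (auto intro!: power_mono)
  then have "204105/100000 * (l^3 + l + 1) \<le> l^3 + 2*l^2 + 2*l + 1"
    "l^3 + 2*l^2 + 2*l + 1 \<le> 204115/100000 * (l^3 + l + 1)"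
    using l by (simp_all add: power_divide algebra_simps)
  moreover have "0 < l^3 + l + 1"
    using l by (simp add: add_pos_pos)
  ultimately have "204105/100000 \<le> poa_bound l 1" "poa_bound l 1 \<le> 204115/100000"
    unfolding poa_bound_eq by (simp_all add: le_divide_eq divide_le_eq)
  then show ?thesis
    by (subst abs_le_iff) simp
qed

lemma sup_is_greatest:
  assumes "\<rho> \<in> S" "\<And>x. x \<in> S \<Longrightarrow> x \<le> \<rho>"
  shows "sup_is S \<rho>"
  unfolding sup_is_def using assms by (auto intro!: cSup_eq_maximum bdd_aboveI[of S \<rho>])

lemma sup_is_greatest_subset:
  assumes "\<rho> \<in> N" "N \<subseteq> P" "\<And>x. x \<in> P \<Longrightarrow> x \<le> \<rho>"
  shows "sup_is N \<rho> \<and> sup_is P \<rho>"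
  using assms by (auto intro!: sup_is_greatest)

lemma sup_is_ratios_critical:
  assumes "critical_ratio l" "admissible_weights w1 w2" "poa_bound l 1 \<in> network_ratios w1 w2"
  shows "sup_is (network_ratios w1 w2) (poa_bound l 1) \<and> sup_is (poa_ratios w1 w2) (poa_bound l 1)"
  using assms network_ratios_subset poa_ratios_le_critical by (intro sup_is_greatest_subset)

lemma sup_is_all_critical:
  assumes "critical_ratio l" "admissible_weights w1 w2" "poa_bound l 1 \<in> network_ratios w1 w2"
  shows "sup_is network_poa_all (poa_bound l 1) \<and> sup_is poa_all (poa_bound l 1)"
proof (rule sup_is_greatest_subset)
  show "poa_bound l 1 \<in> network_poa_all"
    using assms(2,3) unfolding network_poa_all_def by blast
  show "network_poa_all \<subseteq> poa_all"
    using network_ratios_subset unfolding network_poa_all_def poa_all_def by blast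
  show "x \<le> poa_bound l 1" if "x \<in> poa_all" for x
    using that poa_ratios_le_critical[OF assms(1)] unfolding poa_all_def by blast
qed

theorem corollary2:
  shows "\<exists>\<rho>::real. \<bar>\<rho> - 2.0411\<bar> \<le> 0.00005
    \<and> sup_is poa_all \<rho> \<and> sup_is network_poa_all \<rho>
    \<and> (\<exists>w1 w2. w1 > 0 \<and> w2 > 0 \<and> \<bar>w1 / w2 - 1.2704\<bar> \<le> 0.00005
          \<and> sup_is (poa_ratios w1 w2) \<rho> \<and> sup_is (network_ratios w1 w2) \<rho>)
    \<and> (\<exists>w1 w2. w1 > 0 \<and> w2 > 0 \<and> \<bar>w2 / w1 - 1.2704\<bar> \<le> 0.00005
          \<and> sup_is (poa_ratios w1 w2) \<rho> \<and> sup_is (network_ratios w1 w2) \<rho>)"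
proof -
  obtain l where l: "1270361/1000000 \<le> l" "l \<le> 1270362/1000000" and crit: "critical_ratio l"
    using critical_ratio_exists by blast
  then have "0 < l" and adm: "admissible_weights l 1" "admissible_weights 1 l"
    by (auto simp: admissible_weights_def)
  have in_net: "poa_bound l 1 \<in> network_ratios l 1" "poa_bound l 1 \<in> network_ratios 1 l"
    using poa_bound_in_network_ratios[OF \<open>0 < l\<close>] network_ratios_swap by blast+
  have "\<bar>l / 1 - 1.2704\<bar> \<le> 0.00005"
    using l by (subst abs_le_iff) simp
  then show ?thesis
    using poa_bound_approx[OF l] \<open>0 < l\<close> sup_is_all_critical[OF crit adm(1) in_net(1)]
      sup_is_ratios_critical[OF crit adm(1) in_net(1)] sup_is_ratios_critical[OF crit adm(2) in_net(2)]
    by (intro exI[of _ "poa_bound l 1"] conjI exI[of _ l] exI[of _ 1]) auto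
qed

end
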